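(* Let $\gamma\in\Gamma$ and $n,n'\in\mathbb{N}_+$. Then $\max\{\mathcal{H}_{n'}(\mathcal{S}_h):h\in\mathrm{RL}(n,n')\}\preceq\gamma_{\min(n',n),n'}$.
   Context: $\sigma(x)=\max(0,x)$; $\mathrm{RL}(n,n')$ ($n,n'\in\mathbb{N}_+$) is the set of maps $h:\mathbb{R}^n\to\mathbb{R}^{n'}$, $h(x)_i=\sigma(\langle x,w_i\rangle+b_i)$ for some $W\in\mathbb{R}^{n'\times n}$ with rows $w_i$, $b\in\mathbb{R}^{n'}$; convention: $\mathrm{RL}(0,n')$ are constant maps $\{0\}\to\mathbb{R}^{n'}$ with $\mathcal{H}_{n'}(\mathcal{S}_h)={\rm e}_0$. $S_h(x)_i=1$ iff $\langle x,w_i\rangle+b_i>0$ else $0$; $\mathcal{S}_h=\{S_h(x):x\in\mathbb{R}^n\}$; $|s|=\sum_is_i$. $V$: sequences $(v_j)_{j\in\mathbb{N}}$ of nonnegative integers with finite sum; ${\rm e}_i$ has $({\rm e}_i)_j=\delta_{ij}$; $v\preceq w$ iff $\sum_{j\ge J}v_j\le\sum_{j\ge J}w_j$ for all $J\in\mathbb{N}$; for a finite family, $\max_i(v^{(i)})_J=\max_i\sum_{j\ge J}v^{(i)}_j-\max_i\sum_{j\ge J+1}v^{(i)}_j$. $\mathcal{H}_{n'}(\mathcal{S})=(|\{s\in\mathcal{S}:|s|=j\}|)_j$. $\Gamma$: families $(\gamma_{n,n'})_{n'\in\mathbb{N}_+,n\in\{0,\dots,n'\}}$ in $V$ with (i)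 $\max\{\mathcal{H}_{n'}(\mathcal{S}_h):h\in\mathrm{RL}(n,n')\}\preceq\gamma_{n,n'}$ for all $n'\in\mathbb{N}_+$, $n\in\{0,\dots,n'\}$, (ii) $n\le\tilde n\le n'\Rightarrow\gamma_{n,n'}\preceq\gamma_{\tilde n,n'}$. *)

theory Defs
  imports Complex_Main
begin

text \<open>Elements of V: sequences of nonnegative integers indexed by nat with finite sum
  (equivalently, finite support).\<close>
definition inV :: "(nat \<Rightarrow> nat) \<Rightarrow> bool" where
  "inV v \<longleftrightarrow> finite {j. v j \<noteq> 0}"

definition unitV :: "nat \<Rightarrow> (nat \<Rightarrow> nat)" where
  "unitV i = (\<lambda>j. if j = i then 1 else 0)"

definition tailV :: "(nat \<Rightarrow> nat) \<Rightarrow> nat \<Rightarrow> nat" where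
  "tailV v J = (\<Sum>j\<in>{j. J \<le> j \<and> v j \<noteq> 0}. v j)"

definition precV :: "(nat \<Rightarrow> nat) \<Rightarrow> (nat \<Rightarrow> nat) \<Rightarrow> bool" where
  "precV v w \<longleftrightarrow> (\<forall>J. tailV v J \<le> tailV w J)"

text \<open>Maximum of a finite (nonempty) family of elements of V.\<close>
definition maxV :: "(nat \<Rightarrow> nat) set \<Rightarrow> (nat \<Rightarrow> nat)" where
  "maxV A = (\<lambda>J. Max ((\<lambda>v. tailV v J) ` A) - Max ((\<lambda>v. tailV v (Suc J)) ` A))"

definition actPattern :: "nat \<Rightarrow> nat \<Rightarrow> (nat \<Rightarrow> nat \<Rightarrow> real) \<Rightarrow> (nat \<Rightarrow> real) \<Rightarrow> (nat \<Rightarrow> real) \<Rightarrow> (nat \<Rightarrow> nat)" where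
  "actPattern n n' W b x = (\<lambda>i. if i < n' \<and> (\<Sum>k<n. W i k * x k) + b i > 0 then 1 else 0)"

definition actPatterns :: "nat \<Rightarrow> nat \<Rightarrow> (nat \<Rightarrow> nat \<Rightarrow> real) \<Rightarrow> (nat \<Rightarrow> real) \<Rightarrow> (nat \<Rightarrow> nat) set" where
  "actPatterns n n' W b = {actPattern n n' W b x | x. \<forall>k. n \<le> k \<longrightarrow> x k = 0}"

definition patSize :: "nat \<Rightarrow> (nat \<Rightarrow> nat) \<Rightarrow> nat" where
  "patSize n' s = (\<Sum>i<n'. s i)"

definition histH :: "nat \<Rightarrow> (nat \<Rightarrow> nat) set \<Rightarrow> (nat \<Rightarrow> nat)" where
  "histH n' S = (\<lambda>j. card {s\<in>S. patSize n' s = j})"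

definition RLhists :: "nat \<Rightarrow> nat \<Rightarrow> (nat \<Rightarrow> nat) set" where
  "RLhists n n' = (if n = 0 then {unitV 0}
     else {histH n' (actPatterns n n' W b) | W b. True})"

definition GammaSet :: "(nat \<Rightarrow> nat \<Rightarrow> (nat \<Rightarrow> nat)) set" where
  "GammaSet = {\<gamma>. (\<forall>n'\<ge>1. \<forall>n\<le>n'. inV (\<gamma> n n'))
     \<and> (\<forall>n'\<ge>1. \<forall>n\<le>n'. precV (maxV (RLhists n n')) (\<gamma> n n'))
     \<and> (\<forall>n'\<ge>1. \<forall>n m. n \<le> m \<and> m \<le> n' \<longrightarrow> precV (\<gamma> n n') (\<gamma> m n'))}"

end

theory Submission
  imports Defs "HOL-Combinatorics.Permutations"
begin

text \<open>For \<open>n \<le> n'\<close> the claim is property (i) of \<open>\<Gamma>\<close>. For \<open>n > n'\<close>, the activation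
  pattern of \<open>h(x) = \<sigma>(Wx + b)\<close> depends on \<open>x\<close> only through \<open>Wx\<close>, which ranges over the column
  space of the \<open>n' \<times> n\<close> matrix \<open>W\<close>. More than \<open>n'\<close> vectors with \<open>n'\<close> coordinates are linearly dependent,
  so dropping dependent columns one at a time yields an \<open>n' \<times> n'\<close> matrix with the same column
  space, hence the same set of patterns. Thus \<open>RL(n,n')\<close> and \<open>RL(n',n')\<close> realise the same
  histograms, and property (i) at \<open>(n',n')\<close> applies.\<close>

lemma nontrivial_relation_if_card_gt:
  fixes v :: "nat \<Rightarrow> nat \<Rightarrow> real"
  assumes "finite K" and "n' < card K"
  shows "\<exists>c. (\<exists>k\<in>K. c k \<noteq> 0) \<and> (\<forall>i<n'. (\<Sum>k\<in>K. c k * v k i) = 0)"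
  using assms
proof (induction n' arbitrary: K v)
  case 0
  then obtain k where "k \<in> K" by fastforce
  then show ?case by (intro exI[of _ "\<lambda>_. 1"]) auto
next
  case (Suc n K v)
  show ?case
  proof (cases "\<forall>k\<in>K. v k n = 0")
    case True
    with Suc show ?thesis by (fastforce simp: less_Suc_eq)
  next
    case False
    txt \<open>Gaussian elimination: use the pivot \<open>p\<close> to clear coordinate \<open>n\<close> of the other vectors,
      recurse on them, and give \<open>p\<close> the coefficient that cancels coordinate \<open>n\<close>.\<close>
    then obtain p where p: "p \<in> K" "v p n \<noteq> 0" by auto
    define K' where "K' = K - {p}"
    have "finite K'" "n < card K'"
      using Suc.prems p by (auto simp: K'_def)
    from Suc.IH[OF this, of "\<lambda>k i. v k i - v k n / v p n * v p i"]
    obtain c' where c'_nonzero: "\<exists>k\<in>K'. c' k \<noteq> 0"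
      and c'_rel: "\<And>i. i < n \<Longrightarrow>
        (\<Sum>k\<in>K'. c' k * v k i) - (\<Sum>k\<in>K'. c' k * v k n) / v p n * v p i = 0"
      by (auto simp: algebra_simps sum_subtractf sum_distrib_left sum_divide_distrib
          sum_distrib_right)
    define c where "c k = (if k = p then - (\<Sum>k\<in>K'. c' k * v k n) / v p n else c' k)" for k
    have sum_K: "(\<Sum>k\<in>K. c k * v k i) = c p * v p i + (\<Sum>k\<in>K'. c' k * v k i)" for i
    proof -
      have "(\<Sum>k\<in>K. c k * v k i) = c p * v p i + (\<Sum>k\<in>K'. c k * v k i)"
        using p Suc.prems(1) by (simp add: K'_def sum.remove)
      also have "(\<Sum>k\<in>K'. c k * v k i) = (\<Sum>k\<in>K'. c' k * v k i)"
        by (rule sum.cong) (auto simp: c_def K'_def)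
      finally show ?thesis .
    qed
    have "(\<Sum>k\<in>K. c k * v k i) = 0" if "i < Suc n" for i
    proof (cases "i = n")
      case True
      with p(2) show ?thesis by (simp only: sum_K) (simp add: c_def)
    next
      case False
      with that c'_rel[of i] show ?thesis by (simp only: sum_K) (simp add: c_def)
    qed
    moreover have "\<exists>k\<in>K. c k \<noteq> 0"
      using c'_nonzero by (auto simp: c_def K'_def)
    ultimately show ?thesis by blast
  qed
qed

definition colspace :: "nat \<Rightarrow> nat \<Rightarrow> (nat \<Rightarrow> nat \<Rightarrow> real) \<Rightarrow> (nat \<Rightarrow> real) set" where
  "colspace m n' W = {(\<lambda>i. if i < n' then (\<Sum>k<m. W i k * x k) else 0) | x. True}"

lemma colspace_memI: "(\<lambda>i. if i < n' then (\<Sum>k<m. W i k * x k) else 0) \<in> colspace m n' W"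
  unfolding colspace_def by blast

lemma actPatterns_subset_if_colspace_eq:
  assumes "colspace m n' W = colspace m' n' W'"
  shows "actPatterns m n' W b \<subseteq> actPatterns m' n' W' b"
proof
  fix s assume "s \<in> actPatterns m n' W b"
  then obtain x where s: "s = actPattern m n' W b x" unfolding actPatterns_def by auto
  have "(\<lambda>i. if i < n' then (\<Sum>k<m. W i k * x k) else 0) \<in> colspace m' n' W'"
    using assms unfolding colspace_def by blast
  then obtain y where y: "(\<lambda>i. if i < n' then (\<Sum>k<m. W i k * x k) else 0)
      = (\<lambda>i. if i < n' then (\<Sum>k<m'. W' i k * y k) else 0)"
    unfolding colspace_def by auto
  define y' where "y' k = (if k < m' then y k else 0)" for k
  have "(\<Sum>k<m'. W' i k * y' k) = (\<Sum>k<m. W i k * x k)" if "i < n'" for i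
  proof -
    have "(\<Sum>k<m'. W' i k * y' k) = (\<Sum>k<m'. W' i k * y k)"
      by (rule sum.cong) (auto simp: y'_def)
    also have "\<dots> = (\<Sum>k<m. W i k * x k)"
      using fun_cong[OF y, of i] that by simp
    finally show ?thesis .
  qed
  then have "s = actPattern m' n' W' b y'"
    by (auto simp: s actPattern_def)
  moreover have "\<forall>k. m' \<le> k \<longrightarrow> y' k = 0" by (simp add: y'_def)
  ultimately show "s \<in> actPatterns m' n' W' b" unfolding actPatterns_def by blast
qed

lemma actPatterns_eq_if_colspace_eq:
  "colspace m n' W = colspace m' n' W' \<Longrightarrow> actPatterns m n' W b = actPatterns m' n' W' b"
  by (metis actPatterns_subset_if_colspace_eq subset_antisym)

lemma colspace_permute_columns_subset:
  assumes "\<pi> permutes {..<m}"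
  shows "colspace m n' (\<lambda>i k. W i (\<pi> k)) \<subseteq> colspace m n' W"
proof
  fix f assume "f \<in> colspace m n' (\<lambda>i k. W i (\<pi> k))"
  then obtain x where f: "f = (\<lambda>i. if i < n' then (\<Sum>k<m. W i (\<pi> k) * x k) else 0)"
    unfolding colspace_def by auto
  have "(\<Sum>k<m. W i (\<pi> k) * x k) = (\<Sum>k<m. W i k * (x \<circ> inv \<pi>) k)" for i
    using sum.permute[OF permutes_inv[OF assms], of "\<lambda>k. W i (\<pi> k) * x k"]
    by (simp add: permutes_inverses[OF assms])
  then show "f \<in> colspace m n' W"
    unfolding f by (simp only: colspace_memI)
qed

lemma colspace_permute_columns:
  assumes "\<pi> permutes {..<m}"
  shows "colspace m n' (\<lambda>i k. W i (\<pi> k)) = colspace m n' W"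
  using colspace_permute_columns_subset[OF assms]
    colspace_permute_columns_subset[OF permutes_inv[OF assms], of n' "\<lambda>i k. W i (\<pi> k)"]
  by (auto simp: permutes_inverses[OF assms])

lemma colspace_drop_dependent_column:
  assumes "\<And>i. i < n' \<Longrightarrow> W i m = (\<Sum>k<m. d k * W i k)"
  shows "colspace (Suc m) n' W = colspace m n' W"
proof
  show "colspace (Suc m) n' W \<subseteq> colspace m n' W"
  proof
    fix f assume "f \<in> colspace (Suc m) n' W"
    then obtain x where f: "f = (\<lambda>i. if i < n' then (\<Sum>k<Suc m. W i k * x k) else 0)"
      unfolding colspace_def by auto
    have "(\<Sum>k<Suc m. W i k * x k) = (\<Sum>k<m. W i k * (x k + x m * d k))" if "i < n'" for i
      using assms[OF that] by (simp add: algebra_simps sum.distrib sum_distrib_left)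
    then have "f = (\<lambda>i. if i < n' then (\<Sum>k<m. W i k * (\<lambda>k. x k + x m * d k) k) else 0)"
      by (auto simp: f)
    then show "f \<in> colspace m n' W" by (simp only: colspace_memI)
  qed
  show "colspace m n' W \<subseteq> colspace (Suc m) n' W"
  proof
    fix f assume "f \<in> colspace m n' W"
    then obtain x where f: "f = (\<lambda>i. if i < n' then (\<Sum>k<m. W i k * x k) else 0)"
      unfolding colspace_def by auto
    have "(\<Sum>k<Suc m. W i k * (x(m := 0)) k) = (\<Sum>k<m. W i k * x k)" for i
      by simp
    then have "f = (\<lambda>i. if i < n' then (\<Sum>k<Suc m. W i k * (x(m := 0)) k) else 0)"
      by (simp only: f)
    then show "f \<in> colspace (Suc m) n' W" by (simp only: colspace_memI)
  qed
qed

lemma colspace_eq_square: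
  assumes "n' \<le> m"
  shows "\<exists>W'. colspace m n' W = colspace n' n' W'"
  using assms
proof (induction m arbitrary: W)
  case 0
  then show ?case by auto
next
  case (Suc m W)
  show ?case
  proof (cases "n' = Suc m")
    case True
    then show ?thesis by auto
  next
    case False
    with Suc.prems have "n' \<le> m" by simp
    then obtain c p where p: "p < Suc m" "c p \<noteq> 0"
      and rel: "\<And>i. i < n' \<Longrightarrow> (\<Sum>k<Suc m. c k * W i k) = 0"
      using nontrivial_relation_if_card_gt[of "{..<Suc m}" n' "\<lambda>k i. W i k"] by auto
    let ?\<pi> = "transpose p m"
    have \<pi>: "?\<pi> permutes {..<Suc m}"
      using p(1) by (simp add: permutes_swap_id)
    define W\<^sub>\<pi> where "W\<^sub>\<pi> i k = W i (?\<pi> k)" for i k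
    have "W\<^sub>\<pi> i m = (\<Sum>k<m. (- c (?\<pi> k) / c p) * W\<^sub>\<pi> i k)" if "i < n'" for i
    proof -
      have "0 = (\<Sum>k<Suc m. c (?\<pi> k) * W\<^sub>\<pi> i k)"
        using rel[OF that] sum.permute[OF \<pi>, of "\<lambda>k. c k * W i k"] by (simp add: W\<^sub>\<pi>_def)
      also have "\<dots> = (\<Sum>k<m. c (?\<pi> k) * W\<^sub>\<pi> i k) + c p * W\<^sub>\<pi> i m" by simp
      finally show ?thesis
        using p(2) by (simp add: sum_divide_distrib[symmetric] sum_negf field_simps)
    qed
    then have "colspace (Suc m) n' W\<^sub>\<pi> = colspace m n' W\<^sub>\<pi>"
      by (rule colspace_drop_dependent_column)
    moreover have "colspace (Suc m) n' W\<^sub>\<pi> = colspace (Suc m) n' W"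
      unfolding W\<^sub>\<pi>_def by (rule colspace_permute_columns[OF \<pi>])
    moreover obtain W' where "colspace m n' W\<^sub>\<pi> = colspace n' n' W'"
      using Suc.IH \<open>n' \<le> m\<close> by blast
    ultimately show ?thesis by auto
  qed
qed

lemma colspace_pad_columns:
  assumes "m \<le> n"
  shows "colspace n n' (\<lambda>i k. if k < m then W i k else 0) = colspace m n' W"
proof -
  have "(\<Sum>k<n. (if k < m then W i k else 0) * x k) = (\<Sum>k<m. W i k * x k)" for i x
  proof -
    have "(\<Sum>k<n. (if k < m then W i k else 0) * x k) = (\<Sum>k<m. (if k < m then W i k else 0) * x k)"
      by (rule sum.mono_neutral_right) (use assms in auto)
    then show ?thesis by simp
  qed
  then show ?thesis by (simp only: colspace_def)
qed

lemma RLhists_eq_square: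
  assumes "n' \<le> n" and "1 \<le> n'"
  shows "RLhists n n' = RLhists n' n'"
proof
  show "RLhists n n' \<subseteq> RLhists n' n'"
  proof
    fix h assume "h \<in> RLhists n n'"
    then obtain W b where h: "h = histH n' (actPatterns n n' W b)"
      using assms unfolding RLhists_def by auto
    obtain W' where "colspace n n' W = colspace n' n' W'"
      using colspace_eq_square[OF assms(1)] by blast
    with h have "h = histH n' (actPatterns n' n' W' b)"
      using actPatterns_eq_if_colspace_eq by metis
    then show "h \<in> RLhists n' n'" using assms unfolding RLhists_def by auto
  qed
  show "RLhists n' n' \<subseteq> RLhists n n'"
  proof
    fix h assume "h \<in> RLhists n' n'"
    then obtain W b where "h = histH n' (actPatterns n' n' W b)"
      using assms unfolding RLhists_def by auto
    then have "h = histH n' (actPatterns n n' (\<lambda>i k. if k < n' then W i k else 0) b)"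
      using actPatterns_eq_if_colspace_eq[OF colspace_pad_columns[OF assms(1)]] by simp
    then show "h \<in> RLhists n n'" using assms unfolding RLhists_def by auto
  qed
qed

theorem mainTheorem5:
  fixes \<gamma> :: "nat \<Rightarrow> nat \<Rightarrow> (nat \<Rightarrow> nat)" and n n' :: nat
  assumes "\<gamma> \<in> GammaSet" and "1 \<le> n" and "1 \<le> n'"
  shows "precV (maxV (RLhists n n')) (\<gamma> (min n' n) n')"
proof -
  have "RLhists n n' = RLhists (min n' n) n'"
    using RLhists_eq_square[of n' n] assms(3) by (cases "n' \<le> n") (simp_all add: min_def)
  moreover have "precV (maxV (RLhists (min n' n) n')) (\<gamma> (min n' n) n')"
    using assms(1,3) unfolding GammaSet_def by simp
  ultimately show ?thesis by simp
qed

end
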